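(* Let $w$ be a word over $\{a^{\pm1},t^{\pm1},x^{\pm1}\}$ with $\sigma_x(w)=0$. Then $w=1$ has a solution in $L_2$ if and only if $\sigma_t(w)=0$ and there exists $\delta\in\mathbb{Z}$ such that $\mathrm{den}(w)_\delta$ divides $\mathrm{num}(w)_\delta$ in $\mathbb{Z}_2[z^{\pm1}]$.
   Context: $\mathbb{Z}_2$ is the field with two elements and $\mathbb{Z}_2[z^{\pm1}]$ the ring of Laurent polynomials over it. The lamplighter group $L_2$ is realized as the set $\mathbb{Z}\times\mathbb{Z}_2[z^{\pm1}]$ with multiplication $(\delta_1,f_1)(\delta_2,f_2)=(\delta_1+\delta_2,\ f_1z^{-\delta_2}+f_2)$, generated by $a=(0,1)$ and $t=(1,0)$. A solution of $w=1$ is an element $g\in L_2$ with $w(a,t,g)=1$, where $w(a,t,g)$ is the image of $w$ under the homomorphism $F(a,t,x)\to L_2$, $a\mapsto a$, $t\mapsto t$, $x\mapsto g$. $\sigma_x(w),\sigma_t(w)$ are the exponent sums of $x$ and $t$ in $w$. For Laurent polynomials $g,h$, "$g$ divides $h$" means $h=gq$ for some $q\in\mathbb{Z}_2[z^{\pm1}]$ (so $0$ divides only $0$). A $\delta$-parametric polynomial is a finite sum $\sum_{i=s}^{t} f_i(z)z^{i\delta}$ with $f_i\in\mathbb{Z}_2[z^{\pm1}]$ (formally an element of $\mathbb{Z}_2[z^{\pm1},y^{\pm1}]$ with $y$ standing for $z^\delta$); for an integer $\delta$, its instantiation (subscript $\delta$) is the Laurent polynomial obtained by substituting that integer for $\delta$.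 For a word $w$, the $\delta$-parametric polynomials $\mathrm{num}(w),\mathrm{den}(w)$ are defined recursively, reading $w$ from right to left: for the empty word both are $0$; if $w'=\ell w$ is obtained by prepending a letter $\ell$ to $w$, and $x_w=\sigma_x(w)$, $t_w=\sigma_t(w)$, then: if $\ell=x$, $\mathrm{den}(w')=\mathrm{den}(w)+z^{-t_w-x_w\delta}$ and $\mathrm{num}(w')=\mathrm{num}(w)$; if $\ell=x^{-1}$, $\mathrm{den}(w')=\mathrm{den}(w)+z^{-t_w-(x_w-1)\delta}$ and $\mathrm{num}(w')=\mathrm{num}(w)$; if $\ell=a^{\pm1}$, $\mathrm{num}(w')=\mathrm{num}(w)+z^{-t_w-x_w\delta}$ and $\mathrm{den}(w')=\mathrm{den}(w)$; if $\ell=t^{\pm1}$, both are unchanged. *)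

theory Defs
  imports "HOL-Computational_Algebra.Formal_Laurent_Series" "HOL-Library.Z2"
begin

definition laurent_poly :: "bit fls \<Rightarrow> bool" where
  "laurent_poly f \<longleftrightarrow> finite {n. fls_nth f n \<noteq> 0}"

abbreviation zpow :: "int \<Rightarrow> bit fls" where
  "zpow k \<equiv> fls_X_intpow k"

definition lp_dvd :: "bit fls \<Rightarrow> bit fls \<Rightarrow> bool" where
  "lp_dvd g h \<longleftrightarrow> (\<exists>q. laurent_poly q \<and> h = g * q)"

text \<open>Lamplighter group L_2 = Z x Z_2[z^{+-1}]\<close>
type_synonym lelem = "int \<times> bit fls"

definition in_L2 :: "lelem \<Rightarrow> bool" where
  "in_L2 p \<longleftrightarrow> laurent_poly (snd p)"

definition lmult :: "lelem \<Rightarrow> lelem \<Rightarrow> lelem" where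
  "lmult p q = (fst p + fst q, snd p * zpow (- fst q) + snd q)"

definition linv :: "lelem \<Rightarrow> lelem" where
  "linv p = (- fst p, snd p * zpow (fst p))"

definition lone :: lelem where "lone = (0, 0)"
definition gen_a :: lelem where "gen_a = (0, 1)"
definition gen_t :: lelem where "gen_t = (1, 0)"

datatype letter = A | Ai | T | Ti | X | Xi

type_synonym word = "letter list"

fun letter_val :: "lelem \<Rightarrow> letter \<Rightarrow> lelem" where
  "letter_val g A = gen_a"
| "letter_val g Ai = linv gen_a"
| "letter_val g T = gen_t"
| "letter_val g Ti = linv gen_t"
| "letter_val g X = g"
| "letter_val g Xi = linv g"

fun eval_word :: "lelem \<Rightarrow> word \<Rightarrow> lelem" where
  "eval_word g [] = lone"
| "eval_word g (l # w) = lmult (letter_val g l) (eval_word g w)"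

definition is_solution :: "word \<Rightarrow> lelem \<Rightarrow> bool" where
  "is_solution w g \<longleftrightarrow> in_L2 g \<and> eval_word g w = lone"

fun sigma_x :: "word \<Rightarrow> int" where
  "sigma_x [] = 0"
| "sigma_x (l # w) = (case l of X \<Rightarrow> 1 | Xi \<Rightarrow> -1 | _ \<Rightarrow> 0) + sigma_x w"

fun sigma_t :: "word \<Rightarrow> int" where
  "sigma_t [] = 0"
| "sigma_t (l # w) = (case l of T \<Rightarrow> 1 | Ti \<Rightarrow> -1 | _ \<Rightarrow> 0) + sigma_t w"

text \<open>Instantiations num(w)_d and den(w)_d of the d-parametric polynomials num(w), den(w)
  (the recursion is linear, so instantiation commutes with it).\<close>
fun num_inst :: "int \<Rightarrow> word \<Rightarrow> bit fls" where
  "num_inst d [] = 0"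
| "num_inst d (l # w) = num_inst d w +
     (if l = A \<or> l = Ai then zpow (- sigma_t w - sigma_x w * d) else 0)"

fun den_inst :: "int \<Rightarrow> word \<Rightarrow> bit fls" where
  "den_inst d [] = 0"
| "den_inst d (l # w) = den_inst d w +
     (if l = X then zpow (- sigma_t w - sigma_x w * d)
      else if l = Xi then zpow (- sigma_t w - (sigma_x w - 1) * d) else 0)"

end

theory Submission
  imports Defs
begin

text \<open>Evaluating \<open>w\<close> at \<open>x = (d, f)\<close> is linear in \<open>f\<close>: every occurrence of \<open>x\<^sup>\<plusminus>\<^sup>1\<close> and \<open>a\<^sup>\<plusminus>\<^sup>1\<close>
  contributes one monomial, shifted by the \<open>t\<close>-exponent of the suffix to its right, and these
  monomials are exactly those collected in \<open>den(w)\<^sub>d\<close> and \<open>num(w)\<^sub>d\<close>. So \<open>w(a, t, (d, f)) = 1\<close>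
  says \<open>\<sigma>\<^sub>t(w) + \<sigma>\<^sub>x(w) d = 0\<close> and \<open>num(w)\<^sub>d + f den(w)\<^sub>d = 0\<close>; in characteristic 2 the latter
  is \<open>num(w)\<^sub>d = den(w)\<^sub>d f\<close>, a divisibility with the Laurent polynomial \<open>f\<close> as quotient.\<close>

lemma add_eq_0_iff_eq_bit_fls: "a + b = (0::bit fls) \<longleftrightarrow> a = b"
proof -
  have "- b = b" by (rule fls_eqI) simp
  then show ?thesis by (metis add_eq_0_iff2)
qed

lemma eval_word_eq:
  "eval_word (d, f) w = (sigma_t w + sigma_x w * d, num_inst d w + f * den_inst d w)"
proof (induction w)
  case Nil
  show ?case by (simp add: lone_def)
next
  case (Cons l w)
  show ?case
  proof (cases l)
    case Xi
    have "f * zpow d * zpow (- (sigma_t w + sigma_x w * d))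
        = f * zpow (- sigma_t w - (sigma_x w - 1) * d)"
      unfolding mult.assoc fls_X_intpow_times_fls_X_intpow by (simp add: algebra_simps)
    with Cons Xi show ?thesis
      by (simp add: lmult_def linv_def algebra_simps)
  qed (use Cons in \<open>simp_all add: lmult_def linv_def gen_a_def gen_t_def algebra_simps\<close>)
qed

lemma eval_word_eq_lone_iff:
  assumes "sigma_x w = 0"
  shows "eval_word (d, f) w = lone \<longleftrightarrow> sigma_t w = 0 \<and> num_inst d w = den_inst d w * f"
  using assms by (simp add: eval_word_eq lone_def add_eq_0_iff_eq_bit_fls mult.commute)

theorem mainTheorem7:
  fixes w :: word
  assumes "sigma_x w = 0"
  shows "(\<exists>g. is_solution w g) \<longleftrightarrow>
           (sigma_t w = 0 \<and> (\<exists>d::int. lp_dvd (den_inst d w) (num_inst d w)))"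
proof -
  have "is_solution w (d, f) \<longleftrightarrow>
          laurent_poly f \<and> sigma_t w = 0 \<and> num_inst d w = den_inst d w * f" for d f
    using eval_word_eq_lone_iff[OF assms] by (auto simp: is_solution_def in_L2_def)
  then show ?thesis
    by (auto simp: lp_dvd_def)
qed

end
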